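(* Let $V:\mathbb{R}^2\to[0,\infty)$ be Hölder continuous with compact support and $\int V=1$, and let $\tau>0$. For $\varepsilon\in(0,1)$ set $V^\varepsilon(x)=\varepsilon^{-2}V(x/\varepsilon)$ and $V_\varepsilon(x)=\varepsilon^{-2}|\log\varepsilon|^{-1}V(x/\varepsilon)$. For all sufficiently small $\varepsilon$ let $u^\varepsilon\in C^2(\mathbb{R}^2)$ be the unique function with $u^\varepsilon(x)=O(|\log|x||)$ as $|x|\to\infty$ satisfying $$u^\varepsilon(x)=\frac{\tau}{2\pi}\int_{\mathbb{R}^2}\log|x-y|\big[V_\varepsilon(y)u^\varepsilon(y)+V^\varepsilon(y)\big]dy.$$ Then for every $k>0$, $$\lim_{\varepsilon\to0}\sup_{|x|\le k}\left|u^\varepsilon(\varepsilon x)|\log\varepsilon|^{-1}+\frac{\tau}{2\pi+\tau}\right|=0.$$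
   Context: Existence and uniqueness of $u^\varepsilon$ for small $\varepsilon$ (in the class of $C^2$ functions with logarithmic growth) is part of the setting and is taken as given. *)

theory Defs
  imports "HOL-Analysis.Analysis"
begin

definition holder_continuous :: "(real^2 \<Rightarrow> real) \<Rightarrow> bool" where
  "holder_continuous f \<longleftrightarrow>
     (\<exists>\<alpha> C. 0 < \<alpha> \<and> \<alpha> \<le> 1 \<and> (\<forall>x y. \<bar>f x - f y\<bar> \<le> C * dist x y powr \<alpha>))"

definition has_compact_support :: "(real^2 \<Rightarrow> real) \<Rightarrow> bool" where
  "has_compact_support f \<longleftrightarrow> compact (closure {x. f x \<noteq> 0})"

definition C2_plane :: "(real^2 \<Rightarrow> real) \<Rightarrow> bool" where
  "C2_plane f \<longleftrightarrow>
     (\<exists>(f1 :: real^2 \<Rightarrow> ((real^2) \<Rightarrow>\<^sub>L real)) (f2 :: real^2 \<Rightarrow> ((real^2) \<Rightarrow>\<^sub>L ((real^2) \<Rightarrow>\<^sub>L real))).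
        (\<forall>x. (f has_derivative blinfun_apply (f1 x)) (at x)) \<and>
        (\<forall>x. (f1 has_derivative blinfun_apply (f2 x)) (at x)) \<and>
        continuous_on UNIV f2)"

definition log_growth :: "(real^2 \<Rightarrow> real) \<Rightarrow> bool" where
  "log_growth f \<longleftrightarrow> (\<exists>C R. \<forall>x. norm x \<ge> R \<longrightarrow> \<bar>f x\<bar> \<le> C * \<bar>ln (norm x)\<bar>)"

end

(*
  Write L = |log e| and phi(x) = u^e(e x) / L.  The substitution y = e z turns the integral
  equation into
    phi(x) = - t (int V phi + 1) + (t / L) int log|x - z| V(z) (phi(z) + 1) dz,   t = tau / (2 pi),
  because log|e x - e z| = log e + log|x - z| and int V = 1.  The logarithmic kernel is locally
  integrable (near z = x it is dominated by a dyadic step function), so on a fixed ball phi stays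
  within delta = O((M + 1) / L) of the constant c = - t (int V phi + 1), where M = sup |phi| over
  the support of V.  Averaging against V shows that c is within delta of - t / (1 + t); hence
  M <= 1 + 2 delta, which for large L forces M <= 3 and so delta = O(1 / L).
  Only the continuity of u^e enters.
*)

theory Submission
  imports Defs
begin

lemma holder_continuous_imp_continuous_on:
  assumes "holder_continuous f" shows "continuous_on UNIV f"
proof -
  obtain \<alpha> C where "0 < \<alpha>" and holder: "\<And>x y. \<bar>f x - f y\<bar> \<le> C * dist x y powr \<alpha>"
    using assms unfolding holder_continuous_def by blast
  have "isCont f x" for x
  proof -
    have "((\<lambda>y. dist y x) \<longlongrightarrow> 0) (at x)"
      using tendsto_dist[OF tendsto_ident_at tendsto_const, of x x] by simp
    then have "((\<lambda>y. C * dist y x powr \<alpha>) \<longlongrightarrow> 0) (at x)"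
      using \<open>0 < \<alpha>\<close> by (intro tendsto_mult_right_zero tendsto_zero_powrI) auto
    then have "((\<lambda>y. f y - f x) \<longlongrightarrow> 0) (at x)"
      by (rule Lim_null_comparison[rotated]) (use holder in auto)
    then show ?thesis unfolding isCont_def by (rule LIM_zero_cancel)
  qed
  then show ?thesis by (simp add: continuous_at_imp_continuous_on)
qed

lemma C2_plane_imp_continuous_on:
  assumes "C2_plane f" shows "continuous_on UNIV f"
proof -
  obtain f1 :: "real^2 \<Rightarrow> ((real^2) \<Rightarrow>\<^sub>L real)"
    where "\<And>x. (f has_derivative blinfun_apply (f1 x)) (at x)"
    using assms unfolding C2_plane_def by blast
  then show ?thesis
    by (intro continuous_at_imp_continuous_on ballI has_derivative_continuous)
qed

lemma continuous_compact_support_bounds: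
  assumes "continuous_on UNIV f" "has_compact_support f"
  obtains R B where "0 \<le> R" "\<And>z. z \<notin> cball 0 R \<Longrightarrow> f z = 0" "\<And>z. \<bar>f z\<bar> \<le> B"
proof -
  let ?S = "closure {z. f z \<noteq> 0}"
  have "compact ?S" using assms(2) unfolding has_compact_support_def .
  from compact_imp_bounded[OF this] obtain R where "0 < R" and R: "\<forall>z\<in>?S. norm z \<le> R"
    unfolding bounded_pos by blast
  have "compact (f ` ?S)"
    by (rule compact_continuous_image[OF continuous_on_subset[OF assms(1) subset_UNIV] \<open>compact ?S\<close>])
  from compact_imp_bounded[OF this] obtain B where B: "\<forall>y\<in>f ` ?S. norm y \<le> B"
    unfolding bounded_iff by blast
  have support: "z \<in> ?S" if "f z \<noteq> 0" for z
    by (rule subsetD[OF closure_subset]) (simp add: that)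
  show ?thesis
  proof (rule that[of R "max B 0"])
    show "0 \<le> R" using \<open>0 < R\<close> by simp
    show "f z = 0" if "z \<notin> cball 0 R" for z
      using that R support[of z] by (cases "f z = 0") auto
    show "\<bar>f z\<bar> \<le> max B 0" for z
      using B support[of z] by (cases "f z = 0") auto
  qed
qed

lemma filterlim_minus_ln_at_right_0: "filterlim (\<lambda>x::real. - ln x) at_top (at_right 0)"
  using ln_at_0 filterlim_uminus_at_top by (simp add: filterlim_uminus_at_bot)

definition log_majorant :: "'a::euclidean_space \<Rightarrow> 'a \<Rightarrow> real" where
  "log_majorant x z = ln 2 * (\<Sum>n. indicator (ball x ((1/2)^n) - {x}) z)"

lemma indicator_punctured_ball_eq_0:
  fixes x z :: "'a::metric_space"
  assumes "(1/2)^N < dist x z" "N \<le> n"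
  shows "(indicator (ball x ((1/2)^n) - {x}) z :: real) = 0"
proof -
  have "((1::real)/2)^n \<le> (1/2)^N" using assms(2) by (simp add: power_decreasing)
  then have "\<not> dist x z < (1/2)^n" using assms(1) by linarith
  then show ?thesis by (simp add: dist_commute)
qed

lemma summable_indicator_punctured_balls:
  "summable (\<lambda>n. indicator (ball x ((1/2)^n) - {x}) z :: real)"
proof (cases "z = x")
  case False
  then obtain N where "((1::real)/2)^N < dist x z"
    using real_arch_pow_inv[of "dist x z" "1/2"] by auto
  then show ?thesis
    by (intro summable_finite[of "{..<N}"]) (auto intro: indicator_punctured_ball_eq_0)
qed simp

lemma log_majorant_nonneg: "0 \<le> log_majorant x z"
  unfolding log_majorant_def
  by (intro mult_nonneg_nonneg suminf_nonneg summable_indicator_punctured_balls) simp_all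

lemma minus_ln_dist_le_log_majorant: "- ln (dist x z) \<le> log_majorant x z"
proof (cases "0 < dist x z \<and> dist x z < 1")
  case True
  define d where "d = dist x z"
  define k where "k = nat \<lceil>log 2 (1 / d)\<rceil>"
  have d: "0 < d" "d < 1" using True by (auto simp: d_def)
  have "- ln d = ln 2 * log 2 (1 / d)" using d by (simp add: log_def ln_div)
  also have "\<dots> \<le> ln 2 * real k" unfolding k_def by (intro mult_left_mono) (linarith, simp)
  also have "real k = (\<Sum>n<k. indicator (ball x ((1/2)^n) - {x}) z)"
  proof -
    have "z \<in> ball x ((1/2)^n) - {x}" if "n < k" for n
    proof -
      have "real n < log 2 (1 / d)" using that unfolding k_def by linarith
      then have "2 ^ n < 1 / d" using d by (simp add: less_log_iff powr_realpow)
      then show ?thesis using d by (simp add: d_def field_simps dist_commute)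
    qed
    then show ?thesis by simp
  qed
  also have "ln 2 * \<dots> \<le> log_majorant x z"
    unfolding log_majorant_def
    by (intro mult_left_mono sum_le_suminf summable_indicator_punctured_balls) auto
  finally show ?thesis by (simp add: d_def)
next
  case False
  then have "- ln (dist x z) \<le> 0" by auto
  then show ?thesis using log_majorant_nonneg order_trans by blast
qed

lemma has_integral_indicator_punctured_balls:
  fixes x :: "'a::euclidean_space"
  shows "((\<lambda>z. \<Sum>n<k. indicator (ball x ((1/2)^n) - {x}) z) has_integral
           (\<Sum>n<k. ((1/2)^n)^DIM('a)) * measure lborel (ball (0::'a) 1)) UNIV"
proof -
  have "(indicator (ball x ((1/2)^n) - {x}) has_integral
           ((1/2)^n)^DIM('a) * measure lborel (ball (0::'a) 1)) UNIV" for n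
  proof -
    have "ball x ((1/2)^n) - {x} \<in> lmeasurable" by (intro fmeasurable_Diff) auto
    moreover have "measure lebesgue (ball x ((1/2)^n) - {x})
                     = ((1/2)^n)^DIM('a) * measure lborel (ball (0::'a) 1)"
      using content_ball_conv_unit_ball[of "(1/2)^n" x] by (simp add: measure_Diff_null_set)
    ultimately show ?thesis by (metis lmeasurable_iff_has_integral)
  qed
  then show ?thesis by (simp add: has_integral_sum sum_distrib_right)
qed

lemma sum_powers_half_pow_le: "0 < d \<Longrightarrow> (\<Sum>n<k. ((1/2::real)^n)^d) \<le> 2"
proof -
  assume "0 < d"
  have "(\<Sum>n<k. ((1/2::real)^n)^d) \<le> (\<Sum>n<k. (1/2)^n)"
    using power_decreasing[of 1 d "(1/2::real)^_"] \<open>0 < d\<close>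
    by (intro sum_mono) (simp add: Suc_leI power_le_one)
  also have "\<dots> \<le> (\<Sum>n. (1/2)^n)" by (intro sum_le_suminf summable_geometric) auto
  finally show ?thesis by (simp add: suminf_geometric)
qed

lemma log_majorant_integrable:
  fixes x :: "'a::euclidean_space"
  shows "log_majorant x integrable_on UNIV"
    and "integral UNIV (log_majorant x) \<le> 2 * ln 2 * measure lborel (ball (0::'a) 1)"
proof -
  let ?f = "\<lambda>k z. ln (2::real) * (\<Sum>n<k. indicator (ball x ((1/2)^n) - {x}) z)"
  let ?I = "\<lambda>k. ln 2 * ((\<Sum>n<k. ((1/2)^n)^DIM('a)) * measure lborel (ball (0::'a) 1))"
  let ?bound = "2 * ln 2 * measure lborel (ball (0::'a) 1)"
  have f: "(?f k has_integral ?I k) UNIV" for k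
    by (intro has_integral_mult_right has_integral_indicator_punctured_balls)
  have I: "0 \<le> ?I k" "?I k \<le> ?bound" for k
    using mult_right_mono[OF sum_powers_half_pow_le[OF DIM_positive, of k],
        of "measure lborel (ball (0::'a) 1)"]
    by (auto intro!: mult_nonneg_nonneg sum_nonneg)
  have "log_majorant x integrable_on UNIV \<and> (?I \<longlonglongrightarrow> integral UNIV (log_majorant x))"
    unfolding integral_unique[OF f, symmetric]
  proof (rule monotone_convergence_increasing)
    show "?f k integrable_on UNIV" for k using f by blast
    show "?f k z \<le> ?f (Suc k) z" for k z by simp
    show "(\<lambda>k. ?f k z) \<longlonglongrightarrow> log_majorant x z" for z
      unfolding log_majorant_def
      by (intro tendsto_mult_left summable_LIMSEQ summable_indicator_punctured_balls)
    show "bounded (range (\<lambda>k. integral UNIV (?f k)))"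
      unfolding integral_unique[OF f] bounded_iff using I by (intro exI[of _ ?bound]) auto
  qed
  then show "log_majorant x integrable_on UNIV" and "integral UNIV (log_majorant x) \<le> ?bound"
    using Lim_bounded[of ?I _ 0] I by auto
qed

lemma abs_ln_norm_diff_le:
  fixes x z :: "'a::euclidean_space"
  assumes "norm x \<le> K" "norm z \<le> R"
  shows "\<bar>ln (norm (x - z))\<bar> \<le> K + R + log_majorant x z"
proof -
  have "ln (norm (x - z)) \<le> norm (x - z)"
    by (cases "x = z") (auto intro: ln_le_minus_one[THEN order_trans])
  also have "\<dots> \<le> K + R" using norm_triangle_ineq4[of x z] assms by linarith
  finally have "ln (norm (x - z)) \<le> K + R" .
  moreover have "0 \<le> K + R" using assms norm_ge_zero[of x] norm_ge_zero[of z] by linarith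
  ultimately show ?thesis
    using minus_ln_dist_le_log_majorant[of x z] log_majorant_nonneg[of x z]
    unfolding dist_norm abs_le_iff by linarith
qed

lemma abs_integral_ln_kernel_le:
  fixes h :: "'a::euclidean_space \<Rightarrow> real"
  assumes "norm x \<le> K" "0 \<le> H"
    and h_supp: "\<And>z. z \<notin> cball 0 R \<Longrightarrow> h z = 0"
    and h_bound: "\<And>z. z \<in> cball 0 R \<Longrightarrow> \<bar>h z\<bar> \<le> H"
    and "(\<lambda>z. ln (norm (x - z)) * h z) integrable_on UNIV"
  shows "\<bar>integral UNIV (\<lambda>z. ln (norm (x - z)) * h z)\<bar>
           \<le> H * ((K + R) * measure lborel (cball (0::'a) R)
                    + 2 * ln 2 * measure lborel (ball (0::'a) 1))"
proof -
  define g where "g z = H * ((K + R) * indicator (cball 0 R) z + log_majorant x z)" for z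
  have "(indicator (cball (0::'a) R) has_integral measure lborel (cball (0::'a) R)) UNIV"
    using lmeasurable_cball[of "0::'a" R] unfolding lmeasurable_iff_has_integral by simp
  then have g: "(g has_integral
      H * ((K + R) * measure lborel (cball (0::'a) R) + integral UNIV (log_majorant x))) UNIV"
    unfolding g_def using log_majorant_integrable(1)
    by (intro has_integral_mult_right has_integral_add integrable_integral) auto
  have "norm (integral UNIV (\<lambda>z. ln (norm (x - z)) * h z)) \<le> integral UNIV g"
  proof (rule integral_norm_bound_integral[OF assms(5)])
    show "g integrable_on UNIV" using g by blast
    show "norm (ln (norm (x - z)) * h z) \<le> g z" for z
    proof (cases "z \<in> cball 0 R")
      case True
      then have "\<bar>ln (norm (x - z))\<bar> * \<bar>h z\<bar> \<le> (K + R + log_majorant x z) * H"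
        using abs_ln_norm_diff_le[OF assms(1)] h_bound
        by (intro mult_mono) (auto intro: order_trans[OF abs_ge_zero])
      then show ?thesis using True by (simp add: g_def abs_mult mult.commute)
    qed (use h_supp assms(2) log_majorant_nonneg in
        \<open>auto simp: g_def intro: mult_nonneg_nonneg\<close>)
  qed
  also have "\<dots> \<le> H * ((K + R) * measure lborel (cball (0::'a) R)
                          + 2 * ln 2 * measure lborel (ball (0::'a) 1))"
    using integral_unique[OF g] log_majorant_integrable(2)[of x] assms(2)
    by (simp add: mult_left_mono)
  finally show ?thesis by simp
qed

lemma has_integral_scaleR_argument:
  fixes F :: "'a::euclidean_space \<Rightarrow> 'b::banach"
  assumes F: "(F has_integral I) UNIV" and "0 < c" "bounded S"
    and F_supp: "\<And>y. y \<notin> S \<Longrightarrow> F y = 0"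
  shows "((\<lambda>z. F (c *\<^sub>R z)) has_integral I /\<^sub>R c ^ DIM('a)) UNIV"
proof -
  obtain a where "S \<subseteq> cbox (-a) a" using bounded_subset_cbox_symmetric[OF \<open>bounded S\<close>] by blast
  then have F_supp': "F y = 0" if "y \<notin> cbox (-a) a" for y using F_supp that by blast
  have "(\<lambda>y. if y \<in> cbox (-a) a then F y else 0) = F" using F_supp' by auto
  then have "(F has_integral I) (cbox (-a) a)"
    using F has_integral_restrict_UNIV[of "cbox (-a) a" F I] by simp
  from has_integral_affinity'[OF this \<open>0 < c\<close>, of 0]
  have "((\<lambda>z. F (c *\<^sub>R z)) has_integral I /\<^sub>R c ^ DIM('a)) (cbox (-a /\<^sub>R c) (a /\<^sub>R c))"
    by simp
  then show ?thesis
  proof (rule has_integral_on_superset)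
    fix z assume "z \<notin> cbox (-a /\<^sub>R c) (a /\<^sub>R c)"
    then have "c *\<^sub>R z \<notin> cbox (-a) a"
      using \<open>0 < c\<close> by (simp add: mem_box field_simps)
    then show "F (c *\<^sub>R z) = 0" by (rule F_supp')
  qed simp
qed

lemma integrable_continuous_bounded_support:
  fixes f :: "'a::euclidean_space \<Rightarrow> 'b::banach"
  assumes "continuous_on UNIV f" "bounded S" "\<And>z. z \<notin> S \<Longrightarrow> f z = 0"
  shows "f integrable_on UNIV"
proof -
  obtain a where a: "S \<subseteq> cbox (-a) a" using bounded_subset_cbox_symmetric[OF assms(2)] by blast
  have "f integrable_on cbox (-a) a"
    by (rule integrable_continuous, rule continuous_on_subset[OF assms(1)]) simp
  then show ?thesis
    by (rule integrable_on_superset) (use a assms(3) in auto)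
qed

definition solves_potential_equation ::
    "(real^2 \<Rightarrow> real) \<Rightarrow> real \<Rightarrow> real \<Rightarrow> (real^2 \<Rightarrow> real) \<Rightarrow> bool" where
  "solves_potential_equation V \<tau> \<epsilon> w \<longleftrightarrow>
     C2_plane w \<and> log_growth w \<and>
     (\<forall>x. (\<lambda>y. ln (norm (x - y)) *
            ((\<epsilon> powr (-2) * \<bar>ln \<epsilon>\<bar> powr (-1) * V (y /\<^sub>R \<epsilon>)) * w y + \<epsilon> powr (-2) * V (y /\<^sub>R \<epsilon>)))
            integrable_on UNIV \<and>
          w x = \<tau> / (2 * pi) * integral UNIV (\<lambda>y. ln (norm (x - y)) *
            ((\<epsilon> powr (-2) * \<bar>ln \<epsilon>\<bar> powr (-1) * V (y /\<^sub>R \<epsilon>)) * w y + \<epsilon> powr (-2) * V (y /\<^sub>R \<epsilon>))))"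

lemma rescaled_integral_equation:
  fixes V w :: "real^2 \<Rightarrow> real" and e \<tau> :: real
  defines "h \<equiv> \<lambda>z. V z * (w (e *\<^sub>R z) / - ln e + 1)" and "t \<equiv> \<tau> / (2 * pi)"
  assumes e: "0 < e" "e < 1"
    and V_supp: "\<And>z. z \<notin> cball 0 R \<Longrightarrow> V z = 0"
    and h_int: "h integrable_on UNIV"
    and sol: "solves_potential_equation V \<tau> e w"
  shows "(\<lambda>z. ln (norm (x - z)) * h z) integrable_on UNIV"
    and "w (e *\<^sub>R x) / - ln e
           = - t * integral UNIV h + t / - ln e * integral UNIV (\<lambda>z. ln (norm (x - z)) * h z)"
proof -
  define F where "F = (\<lambda>y. ln (norm (e *\<^sub>R x - y)) *
      ((e powr (-2) * \<bar>ln e\<bar> powr (-1) * V (y /\<^sub>R e)) * w y + e powr (-2) * V (y /\<^sub>R e)))"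
  have F_int: "F integrable_on UNIV" and eq: "w (e *\<^sub>R x) = t * integral UNIV F"
    using sol unfolding solves_potential_equation_def F_def t_def by blast+
  have L: "0 < - ln e" using e by simp
  have "F y = 0" if "y \<notin> cball 0 (e * R)" for y
  proof -
    have "y /\<^sub>R e \<notin> cball 0 R" using that e by (simp add: field_simps)
    then show ?thesis by (simp add: F_def V_supp)
  qed
  then have "((\<lambda>z. F (e *\<^sub>R z)) has_integral integral UNIV F /\<^sub>R e ^ DIM(real^2)) UNIV"
    using F_int e by (intro has_integral_scaleR_argument[where S = "cball 0 (e * R)"]) auto
  moreover have "F (e *\<^sub>R z) = ln (norm (e *\<^sub>R x - e *\<^sub>R z)) * h z /\<^sub>R e ^ DIM(real^2)" for z
    using e L by (simp add: F_def h_def powr_minus_divide power2_eq_square field_simps)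
  ultimately have "((\<lambda>z. ln (norm (e *\<^sub>R x - e *\<^sub>R z)) * h z) has_integral integral UNIV F) UNIV"
    using e by (simp add: has_integral_mult_right_iff)
  moreover have "(ln e + ln (norm (x - z))) * h z = ln (norm (e *\<^sub>R x - e *\<^sub>R z)) * h z"
    if "z \<in> UNIV - {x}" for z
    using that e by (simp add: ln_mult flip: scaleR_diff_right)
  ultimately have "((\<lambda>z. (ln e + ln (norm (x - z))) * h z) has_integral integral UNIV F) UNIV"
    by (rule has_integral_spike[OF negligible_sing, rotated])
  from has_integral_diff[OF this has_integral_mult_right[OF integrable_integral[OF h_int], of "ln e"]]
  have ln_h: "((\<lambda>z. ln (norm (x - z)) * h z)
                 has_integral integral UNIV F - ln e * integral UNIV h) UNIV"
    by (simp add: algebra_simps)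
  then show "(\<lambda>z. ln (norm (x - z)) * h z) integrable_on UNIV" by blast
  show "w (e *\<^sub>R x) / - ln e
          = - t * integral UNIV h + t / - ln e * integral UNIV (\<lambda>z. ln (norm (x - z)) * h z)"
    using L unfolding integral_unique[OF ln_h] eq by (simp add: field_simps)
qed

lemma abs_integral_weighted_diff_le:
  fixes V f :: "'a::euclidean_space \<Rightarrow> real"
  assumes V_nonneg: "\<And>z. 0 \<le> V z" and V_int: "V integrable_on UNIV" and V_mass: "integral UNIV V = 1"
    and Vf_int: "(\<lambda>z. V z * f z) integrable_on UNIV"
    and close: "\<And>z. V z \<noteq> 0 \<Longrightarrow> \<bar>f z - c\<bar> \<le> \<delta>"
  shows "\<bar>integral UNIV (\<lambda>z. V z * f z) - c\<bar> \<le> \<delta>"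
proof -
  have "integral UNIV (\<lambda>z. V z * f z) - c = integral UNIV (\<lambda>z. V z * (f z - c))"
    using integral_diff[OF Vf_int integrable_on_mult_left[OF V_int, of c]] V_mass
    by (simp add: algebra_simps)
  also have "norm \<dots> \<le> integral UNIV (\<lambda>z. V z * \<delta>)"
  proof (rule integral_norm_bound_integral)
    show "(\<lambda>z. V z * (f z - c)) integrable_on UNIV"
      unfolding right_diff_distrib by (intro integrable_diff Vf_int integrable_on_mult_left V_int)
    show "(\<lambda>z. V z * \<delta>) integrable_on UNIV" using V_int by (rule integrable_on_mult_left)
    show "norm (V z * (f z - c)) \<le> V z * \<delta>" for z
      using close[of z] V_nonneg[of z] by (cases "V z = 0") (auto simp: abs_mult mult_left_mono)
  qed
  also have "\<dots> = \<delta>" using V_mass by simp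
  finally show ?thesis by simp
qed

lemma self_consistent_estimate:
  fixes \<phi> V :: "'a::euclidean_space \<Rightarrow> real" and S T :: "'a set" and t :: real
  defines "M \<equiv> Sup ((\<lambda>z. \<bar>\<phi> z\<bar>) ` S)"
    and "c \<equiv> - t * (integral UNIV (\<lambda>z. V z * \<phi> z) + 1)"
  assumes "0 < t" "0 < L" "0 \<le> \<beta>" "4 * \<beta> \<le> L"
    and V_nonneg: "\<And>z. 0 \<le> V z" and V_int: "V integrable_on UNIV" and V_mass: "integral UNIV V = 1"
    and V\<phi>_int: "(\<lambda>z. V z * \<phi> z) integrable_on UNIV"
    and V_supp: "\<And>z. V z \<noteq> 0 \<Longrightarrow> z \<in> S"
    and "S \<noteq> {}" and \<phi>_bdd: "bdd_above ((\<lambda>z. \<bar>\<phi> z\<bar>) ` S)" and "S \<subseteq> T"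
    and close: "\<And>x. x \<in> T \<Longrightarrow> \<bar>\<phi> x - c\<bar> \<le> \<beta> * (M + 1) / L"
    and "x \<in> T"
  shows "\<bar>\<phi> x + t / (1 + t)\<bar> \<le> 8 * \<beta> / L"
proof -
  define \<delta> where "\<delta> = \<beta> * (M + 1) / L"
  define a where "a = integral UNIV (\<lambda>z. V z * \<phi> z)"
  have t_frac: "0 \<le> t / (1 + t)" "t / (1 + t) \<le> 1" using \<open>0 < t\<close> by simp_all
  have "\<bar>a - c\<bar> \<le> \<delta>"
    using V_supp \<open>S \<subseteq> T\<close> close unfolding \<delta>_def a_def
    by (intro abs_integral_weighted_diff_le[OF V_nonneg V_int V_mass V\<phi>_int]) blast
  moreover have "c + t / (1 + t) = - (t / (1 + t)) * (a - c)"
    using \<open>0 < t\<close> unfolding c_def a_def by (simp add: field_simps)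
  ultimately have c_close: "\<bar>c + t / (1 + t)\<bar> \<le> \<delta>"
    using mult_mono[OF t_frac(2), of "\<bar>a - c\<bar>" \<delta>] t_frac(1) \<open>0 < t\<close> by (simp add: abs_mult)
  have "\<bar>\<phi> z\<bar> \<le> 1 + 2 * \<delta>" if "z \<in> S" for z
    using close[of z] that \<open>S \<subseteq> T\<close> c_close t_frac unfolding \<delta>_def by auto
  then have "M \<le> 1 + 2 * \<delta>"
    unfolding M_def using \<open>S \<noteq> {}\<close> by (intro cSUP_least) auto
  moreover obtain z where "z \<in> S" using \<open>S \<noteq> {}\<close> by blast
  then have "0 \<le> M" unfolding M_def using \<phi>_bdd by (intro cSUP_upper2) auto
  moreover have "4 * \<delta> \<le> M + 1"
    using mult_right_mono[OF \<open>4 * \<beta> \<le> L\<close>, of "M + 1"] \<open>0 < L\<close> \<open>0 \<le> M\<close>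
    unfolding \<delta>_def by (simp add: field_simps)
  ultimately have "\<beta> * (M + 1) \<le> \<beta> * 4"
    using \<open>0 \<le> \<beta>\<close> by (intro mult_left_mono) linarith+
  then have "\<delta> \<le> 4 * \<beta> / L"
    using \<open>0 < L\<close> unfolding \<delta>_def by (simp add: divide_right_mono mult.commute)
  then show ?thesis
    using close[OF \<open>x \<in> T\<close>] c_close unfolding \<delta>_def by linarith
qed

lemma rescaled_solution_representation:
  fixes V w :: "real^2 \<Rightarrow> real" and e \<tau> R :: real
  defines "\<phi> \<equiv> \<lambda>z. w (e *\<^sub>R z) / - ln e" and "t \<equiv> \<tau> / (2 * pi)"
  assumes e: "0 < e" "e < 1"
    and V_cont: "continuous_on UNIV V" and V_supp: "\<And>z. z \<notin> cball 0 R \<Longrightarrow> V z = 0"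
    and V_mass: "integral UNIV V = 1"
    and sol: "solves_potential_equation V \<tau> e w"
  shows "continuous_on UNIV \<phi>"
    and "(\<lambda>z. ln (norm (y - z)) * (V z * (\<phi> z + 1))) integrable_on UNIV"
    and "\<phi> y = - t * (integral UNIV (\<lambda>z. V z * \<phi> z) + 1)
               + t / - ln e * integral UNIV (\<lambda>z. ln (norm (y - z)) * (V z * (\<phi> z + 1)))"
proof -
  have w_cont: "continuous_on UNIV w"
    using sol C2_plane_imp_continuous_on unfolding solves_potential_equation_def by blast
  show \<phi>_cont: "continuous_on UNIV \<phi>"
    unfolding \<phi>_def using e by (intro continuous_intros continuous_on_compose2[OF w_cont]) auto
  have V\<phi>_int: "(\<lambda>z. V z * \<phi> z) integrable_on UNIV"
    and h_int: "(\<lambda>z. V z * (\<phi> z + 1)) integrable_on UNIV"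
    using V_supp by (auto intro!: integrable_continuous_bounded_support[OF _ bounded_cball, of _ 0 R]
        continuous_intros V_cont \<phi>_cont)
  have "V integrable_on UNIV"
    using integrable_continuous_bounded_support[OF V_cont bounded_cball[of 0 R] V_supp] .
  then have "integral UNIV (\<lambda>z. V z * (\<phi> z + 1)) = integral UNIV (\<lambda>z. V z * \<phi> z) + 1"
    using integral_add[OF V\<phi>_int] V_mass by (simp add: distrib_left)
  then show "(\<lambda>z. ln (norm (y - z)) * (V z * (\<phi> z + 1))) integrable_on UNIV"
    and "\<phi> y = - t * (integral UNIV (\<lambda>z. V z * \<phi> z) + 1)
               + t / - ln e * integral UNIV (\<lambda>z. ln (norm (y - z)) * (V z * (\<phi> z + 1)))"
    using rescaled_integral_equation[where x = y, OF e V_supp _ sol] h_int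
    unfolding \<phi>_def t_def by simp_all
qed

lemma rescaled_solution_near_mean:
  fixes V w :: "real^2 \<Rightarrow> real" and e \<tau> R K Vm M :: real
  defines "\<phi> \<equiv> \<lambda>z. w (e *\<^sub>R z) / - ln e" and "t \<equiv> \<tau> / (2 * pi)"
    and "C \<equiv> (K + R) * measure lborel (cball (0::real^2) R)
               + 2 * ln 2 * measure lborel (ball (0::real^2) 1)"
  assumes e: "0 < e" "e < 1" and "0 < \<tau>"
    and V_cont: "continuous_on UNIV V" and V_nonneg: "\<And>z. 0 \<le> V z"
    and V_supp: "\<And>z. z \<notin> cball 0 R \<Longrightarrow> V z = 0" and "0 \<le> R"
    and V_le: "\<And>z. V z \<le> Vm" and V_mass: "integral UNIV V = 1"
    and sol: "solves_potential_equation V \<tau> e w"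
    and M: "\<And>z. z \<in> cball 0 R \<Longrightarrow> \<bar>\<phi> z\<bar> \<le> M"
    and y: "norm y \<le> K"
  shows "\<bar>\<phi> y + t * (integral UNIV (\<lambda>z. V z * \<phi> z) + 1)\<bar> \<le> t * Vm * C * (M + 1) / - ln e"
proof -
  have \<phi>_apply: "\<And>z. \<phi> z = w (e *\<^sub>R z) / - ln e" by (simp add: \<phi>_def)
  note representation = rescaled_solution_representation[OF e V_cont V_supp V_mass sol,
      folded \<phi>_apply t_def]
  have "0 < t" "0 < - ln e" using \<open>0 < \<tau>\<close> e by (simp_all add: t_def)
  have "\<bar>integral UNIV (\<lambda>z. ln (norm (y - z)) * (V z * (\<phi> z + 1)))\<bar> \<le> Vm * (M + 1) * C"
    unfolding C_def
  proof (rule abs_integral_ln_kernel_le[OF y _ _ _ representation(2)])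
    show "0 \<le> Vm * (M + 1)"
      using V_nonneg[of 0] V_le[of 0] M[of 0] \<open>0 \<le> R\<close> by simp
    show "V z * (\<phi> z + 1) = 0" if "z \<notin> cball 0 R" for z using V_supp[OF that] by simp
    show "\<bar>V z * (\<phi> z + 1)\<bar> \<le> Vm * (M + 1)" if "z \<in> cball 0 R" for z
      using M[OF that] V_nonneg[of z] V_le[of z] unfolding abs_mult by (intro mult_mono) auto
  qed
  then have "t / - ln e * \<bar>integral UNIV (\<lambda>z. ln (norm (y - z)) * (V z * (\<phi> z + 1)))\<bar>
               \<le> t / - ln e * (Vm * (M + 1) * C)"
    by (rule mult_left_mono) (rule divide_nonneg_pos[OF less_imp_le[OF \<open>0 < t\<close>] \<open>0 < - ln e\<close>])
  then show ?thesis
    using representation(3)[where y = y] \<open>0 < t\<close> \<open>0 < - ln e\<close>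
    by (simp add: abs_mult mult_ac)
qed

lemma rescaled_solution_estimate:
  fixes V w :: "real^2 \<Rightarrow> real" and e \<tau> R K Vm :: real
  defines "C \<equiv> (K + R) * measure lborel (cball (0::real^2) R)
                + 2 * ln 2 * measure lborel (ball (0::real^2) 1)"
  assumes e: "0 < e" "e < 1" and "0 < \<tau>"
    and V_cont: "continuous_on UNIV V" and V_nonneg: "\<And>z. 0 \<le> V z"
    and V_supp: "\<And>z. z \<notin> cball 0 R \<Longrightarrow> V z = 0" and "0 \<le> R" "R \<le> K"
    and V_le: "\<And>z. V z \<le> Vm" and V_mass: "integral UNIV V = 1"
    and sol: "solves_potential_equation V \<tau> e w"
    and e_small: "4 * (\<tau> / (2 * pi) * Vm * C) \<le> - ln e"
    and x: "norm x \<le> K"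
  shows "\<bar>w (e *\<^sub>R x) * \<bar>ln e\<bar> powr (-1) + \<tau> / (2 * pi + \<tau>)\<bar>
           \<le> 8 * (\<tau> / (2 * pi) * Vm * C) / - ln e"
proof -
  define t where "t = \<tau> / (2 * pi)"
  define L where "L = - ln e"
  define \<phi> where "\<phi> z = w (e *\<^sub>R z) / L" for z
  define M where "M = Sup ((\<lambda>z. \<bar>\<phi> z\<bar>) ` cball 0 R)"
  have "0 < t" "0 < L" using \<open>0 < \<tau>\<close> e by (simp_all add: t_def L_def)
  have \<phi>_cont: "continuous_on UNIV \<phi>"
    using rescaled_solution_representation(1)[OF e V_cont V_supp V_mass sol]
    unfolding \<phi>_def[abs_def] L_def .
  then have "continuous_on (cball 0 R) (\<lambda>z. \<bar>\<phi> z\<bar>)"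
    by (intro continuous_intros continuous_on_subset[OF \<phi>_cont] subset_UNIV)
  then have \<phi>_bdd: "bdd_above ((\<lambda>z. \<bar>\<phi> z\<bar>) ` cball 0 R)"
    by (intro bounded_imp_bdd_above compact_imp_bounded compact_continuous_image compact_cball)
  have M: "\<bar>\<phi> z\<bar> \<le> M" if "z \<in> cball 0 R" for z
    unfolding M_def using that \<phi>_bdd by (rule cSUP_upper)
  have near_mean: "\<bar>\<phi> y - - t * (integral UNIV (\<lambda>z. V z * \<phi> z) + 1)\<bar> \<le> t * Vm * C * (M + 1) / L"
    if "y \<in> cball 0 K" for y
    using rescaled_solution_near_mean[where K = K and M = M and y = y,
        OF e \<open>0 < \<tau>\<close> V_cont V_nonneg V_supp \<open>0 \<le> R\<close> V_le V_mass sol,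
        folded L_def t_def, folded \<phi>_def C_def] M that
    by simp
  have \<phi>_estimate: "\<bar>\<phi> x + t / (1 + t)\<bar> \<le> 8 * (t * Vm * C) / L"
  proof (rule self_consistent_estimate[where S = "cball 0 R" and T = "cball 0 K",
        OF \<open>0 < t\<close> \<open>0 < L\<close> _ e_small[folded L_def t_def] V_nonneg _ V_mass _ _ _ \<phi>_bdd _
        near_mean[unfolded M_def]])
    show "0 \<le> t * Vm * C"
      unfolding C_def using \<open>0 < t\<close> V_nonneg[of 0] V_le[of 0] \<open>0 \<le> R\<close> \<open>R \<le> K\<close> by simp
    show "V integrable_on UNIV" "(\<lambda>z. V z * \<phi> z) integrable_on UNIV"
      using V_supp by (auto intro!: integrable_continuous_bounded_support[OF _ bounded_cball, of _ 0 R]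
          continuous_intros V_cont \<phi>_cont)
    show "z \<in> cball 0 R" if "V z \<noteq> 0" for z using V_supp that by blast
  qed (use \<open>0 \<le> R\<close> \<open>R \<le> K\<close> x in auto)
  have \<phi>_x: "w (e *\<^sub>R x) * \<bar>ln e\<bar> powr (-1) = \<phi> x"
    using e by (simp add: \<phi>_def L_def powr_minus_divide)
  have "t / (1 + t) = \<tau> / (2 * pi + \<tau>)" using \<open>0 < \<tau>\<close> by (simp add: t_def field_simps)
  from \<phi>_estimate[unfolded this] show ?thesis unfolding \<phi>_x t_def L_def .
qed

lemma tendsto_SUP_abs_zero:
  fixes f :: "'a \<Rightarrow> 'b \<Rightarrow> real"
  assumes "S \<noteq> {}" and bound: "eventually (\<lambda>e. \<forall>x\<in>S. \<bar>f e x\<bar> \<le> g e) F" and "(g \<longlongrightarrow> 0) F"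
  shows "((\<lambda>e. SUP x\<in>S. \<bar>f e x\<bar>) \<longlongrightarrow> 0) F"
proof (rule tendsto_sandwich[OF _ _ tendsto_const \<open>(g \<longlongrightarrow> 0) F\<close>])
  obtain x where "x \<in> S" using \<open>S \<noteq> {}\<close> by blast
  show "eventually (\<lambda>e. 0 \<le> (SUP x\<in>S. \<bar>f e x\<bar>)) F"
    using bound
  proof eventually_elim
    case (elim e)
    then have "bdd_above ((\<lambda>x. \<bar>f e x\<bar>) ` S)" by (intro bdd_aboveI2[where M = "g e"]) blast
    then show ?case using \<open>x \<in> S\<close> by (intro cSUP_upper2) auto
  qed
  show "eventually (\<lambda>e. (SUP x\<in>S. \<bar>f e x\<bar>) \<le> g e) F"
    using bound by eventually_elim (intro cSUP_least \<open>S \<noteq> {}\<close>, blast)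
qed

theorem theorem3p2:
  fixes V :: "real^2 \<Rightarrow> real" and \<tau> :: real
    and u :: "real \<Rightarrow> real^2 \<Rightarrow> real"
  assumes V_nonneg: "\<forall>x. V x \<ge> 0"
    and V_holder: "holder_continuous V"
    and V_supp: "has_compact_support V"
    and V_int: "V integrable_on UNIV" and V_mass: "integral UNIV V = 1"
    and tau_pos: "\<tau> > 0"
    and u_sol: "\<exists>\<epsilon>0>0. \<forall>\<epsilon>. 0 < \<epsilon> \<and> \<epsilon> < \<epsilon>0 \<longrightarrow>
        C2_plane (u \<epsilon>) \<and> log_growth (u \<epsilon>) \<and>
        (\<forall>x. (\<lambda>y. ln (norm (x - y)) *
               ((\<epsilon> powr (-2) * \<bar>ln \<epsilon>\<bar> powr (-1) * V (y /\<^sub>R \<epsilon>)) * u \<epsilon> y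
                 + \<epsilon> powr (-2) * V (y /\<^sub>R \<epsilon>))) integrable_on UNIV \<and>
             u \<epsilon> x = \<tau> / (2 * pi) *
               integral UNIV (\<lambda>y. ln (norm (x - y)) *
                 ((\<epsilon> powr (-2) * \<bar>ln \<epsilon>\<bar> powr (-1) * V (y /\<^sub>R \<epsilon>)) * u \<epsilon> y
                   + \<epsilon> powr (-2) * V (y /\<^sub>R \<epsilon>))))"
  shows "\<forall>k>0. ((\<lambda>\<epsilon>. SUP x\<in>cball 0 k.
             \<bar>u \<epsilon> (\<epsilon> *\<^sub>R x) * \<bar>ln \<epsilon>\<bar> powr (-1) + \<tau> / (2 * pi + \<tau>)\<bar>)
           \<longlongrightarrow> 0) (at_right 0)"
proof (intro allI impI)
  fix k :: real assume "0 < k"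
  have V_cont: "continuous_on UNIV V" using V_holder by (rule holder_continuous_imp_continuous_on)
  obtain R Vm where "0 \<le> R" and V_zero: "\<And>z. z \<notin> cball 0 R \<Longrightarrow> V z = 0"
    and V_le: "\<And>z. \<bar>V z\<bar> \<le> Vm"
    using continuous_compact_support_bounds[OF V_cont V_supp] by blast
  obtain \<epsilon>0 where "0 < \<epsilon>0"
    and sol: "\<forall>\<epsilon>. 0 < \<epsilon> \<and> \<epsilon> < \<epsilon>0 \<longrightarrow> solves_potential_equation V \<tau> \<epsilon> (u \<epsilon>)"
    using u_sol unfolding solves_potential_equation_def by blast
  define K where "K = max k R"
  define B where "B = \<tau> / (2 * pi) * Vm * ((K + R) * measure lborel (cball (0::real^2) R)
                    + 2 * ln 2 * measure lborel (ball (0::real^2) 1))"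
  have "\<forall>\<^sub>F \<epsilon> in at_right 0. 0 < \<epsilon> \<and> \<epsilon> < min \<epsilon>0 1"
    using \<open>0 < \<epsilon>0\<close> unfolding eventually_at_right_field by (intro exI[of _ "min \<epsilon>0 1"]) simp
  moreover have "\<forall>\<^sub>F \<epsilon> in at_right 0. 4 * B \<le> - ln \<epsilon>"
    using filterlim_minus_ln_at_right_0 unfolding filterlim_at_top by blast
  ultimately have "\<forall>\<^sub>F \<epsilon> in at_right 0. \<forall>x\<in>cball 0 k.
      \<bar>u \<epsilon> (\<epsilon> *\<^sub>R x) * \<bar>ln \<epsilon>\<bar> powr (-1) + \<tau> / (2 * pi + \<tau>)\<bar> \<le> 8 * B / - ln \<epsilon>"
  proof eventually_elim
    case (elim \<epsilon>)
    show ?case unfolding B_def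
      by (intro ballI rescaled_solution_estimate[OF _ _ tau_pos V_cont _ V_zero _ _ abs_le_D1[OF V_le] V_mass])
        (use elim[unfolded B_def] sol V_nonneg \<open>0 \<le> R\<close> in \<open>auto simp: K_def\<close>)
  qed
  moreover have "((\<lambda>\<epsilon>. 8 * B / - ln \<epsilon>) \<longlongrightarrow> 0) (at_right 0)"
    using filterlim_at_top_imp_at_infinity[OF filterlim_minus_ln_at_right_0]
    by (rule tendsto_divide_0[OF tendsto_const])
  ultimately show "((\<lambda>\<epsilon>. SUP x\<in>cball 0 k.
      \<bar>u \<epsilon> (\<epsilon> *\<^sub>R x) * \<bar>ln \<epsilon>\<bar> powr (-1) + \<tau> / (2 * pi + \<tau>)\<bar>) \<longlongrightarrow> 0) (at_right 0)"
    using \<open>0 < k\<close> by (intro tendsto_SUP_abs_zero) auto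
qed

end
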